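(* Let $\mathcal{I}$ be an ideal on $\omega$ with $\mathrm{fin} \subseteq \mathcal{I}$. Fix a recursive injection $\sharp : \omega^{<\omega} \to \omega$, and for $f \in \omega^\omega$ let $e(f) \in \omega^\omega$ be the function $e(f)(n) = \sharp(f|_n)$. Suppose $T \subseteq \omega^\omega$ and $C : \omega^\omega \to [\omega]^\omega$ are such that (1) for every $f \in \omega^\omega$: $f \in T$ if and only if for all $g \in \omega^\omega$, $S(C(f), f, e(g)) \in \mathcal{I}$; (2) $C$ is injective and the image of $C$ is an $\mathcal{I}$-AD family. For $f \in \omega^\omega$ define $E(f) \in \omega^\omega$ by $E(f)(n) = f(n)$ if $f \in T$ and $n \in C(f)$, and $E(f)(n) = e(f)(n)$ otherwise. Then $\mathcal{E} = \{E(f) : f \in \omega^\omega\}$ is an $\mathcal{I}$-MED family. Moreover, if $\mathcal{I}$ and $T$ are Borel and $C$ is analytic, then $\mathcal{E}$ is analytic.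
   Context: $\mathrm{fin}$ is the ideal of finite subsets of $\omega$. For an ideal $\mathcal{I}$ on $\omega$, $\mathcal{I}^+ = \mathcal{P}(\omega)\setminus\mathcal{I}$ is the family of $\mathcal{I}$-positive sets. A family $\mathcal{A}$ is $\mathcal{I}$-AD if $\mathcal{A} \subseteq \mathcal{I}^+$ and $A \cap A' \in \mathcal{I}$ for all distinct $A, A' \in \mathcal{A}$. For functions $f,g$ and $X \subseteq \mathrm{dom}(f)\cap\mathrm{dom}(g)$, $S(X,f,g) = \{n \in X : f(n) = g(n)\}$. Functions $f,g \in \omega^\omega$ are $\mathcal{I}$-eventually different ($\mathcal{I}$-ED) if $\{n : f(n) = g(n)\} \in \mathcal{I}$. A set $\mathcal{E} \subseteq \omega^\omega$ is an $\mathcal{I}$-ED family if any two distinct members are $\mathcal{I}$-ED, and an $\mathcal{I}$-MED family ($\mathcal{I}$-maximal eventually different family) if moreover for every $h \in \omega^\omega$ there is $f \in \mathcal{E}$ such that $f,h$ are not $\mathcal{I}$-ED. Ideals are viewed as subsets of $2^\omega$ via characteristic functions when speaking of Borel/analytic. *)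

theory Defs
  imports "HOL-Analysis.Analysis"
begin

definition ideal_on_nat :: "nat set set \<Rightarrow> bool" where
  "ideal_on_nat I \<longleftrightarrow> {} \<in> I \<and> UNIV \<notin> I \<and>
     (\<forall>A B. A \<in> I \<longrightarrow> B \<subseteq> A \<longrightarrow> B \<in> I) \<and>
     (\<forall>A B. A \<in> I \<longrightarrow> B \<in> I \<longrightarrow> A \<union> B \<in> I)"

definition fin :: "nat set set" where
  "fin = {A. finite A}"

definition positive :: "nat set set \<Rightarrow> nat set set" where
  "positive I = UNIV - I"

definition I_AD :: "nat set set \<Rightarrow> nat set set \<Rightarrow> bool" where
  "I_AD I \<A> \<longleftrightarrow> \<A> \<subseteq> positive I \<and> (\<forall>A\<in>\<A>. \<forall>A'\<in>\<A>. A \<noteq> A' \<longrightarrow> A \<inter> A' \<in> I)"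

definition S :: "nat set \<Rightarrow> (nat \<Rightarrow> nat) \<Rightarrow> (nat \<Rightarrow> nat) \<Rightarrow> nat set" where
  "S X f g = {n \<in> X. f n = g n}"

definition I_ED :: "nat set set \<Rightarrow> (nat \<Rightarrow> nat) \<Rightarrow> (nat \<Rightarrow> nat) \<Rightarrow> bool" where
  "I_ED I f g \<longleftrightarrow> {n. f n = g n} \<in> I"

definition I_ED_family :: "nat set set \<Rightarrow> (nat \<Rightarrow> nat) set \<Rightarrow> bool" where
  "I_ED_family I \<E> \<longleftrightarrow> (\<forall>f\<in>\<E>. \<forall>g\<in>\<E>. f \<noteq> g \<longrightarrow> I_ED I f g)"

definition I_MED_family :: "nat set set \<Rightarrow> (nat \<Rightarrow> nat) set \<Rightarrow> bool" where
  "I_MED_family I \<E> \<longleftrightarrow> I_ED_family I \<E> \<and> (\<forall>h. \<exists>f\<in>\<E>. \<not> I_ED I f h)"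

definition restr :: "(nat \<Rightarrow> nat) \<Rightarrow> nat \<Rightarrow> nat list" where
  "restr f n = map f [0..<n]"

definition enc :: "(nat list \<Rightarrow> nat) \<Rightarrow> (nat \<Rightarrow> nat) \<Rightarrow> nat \<Rightarrow> nat" where
  "enc code f n = code (restr f n)"

text \<open>Subsets of omega viewed as points of Cantor space 2^omega via characteristic functions.\<close>
definition chi :: "nat set \<Rightarrow> nat \<Rightarrow> bool" where
  "chi A = (\<lambda>n. n \<in> A)"

definition borel_family :: "nat set set \<Rightarrow> bool" where
  "borel_family I \<longleftrightarrow> chi ` I \<in> sets (borel :: (nat \<Rightarrow> bool) measure)"

definition analytic :: "'a::topological_space set \<Rightarrow> bool" where
  "analytic X \<longleftrightarrow> X = {} \<or>
     (\<exists>g :: (nat \<Rightarrow> nat) \<Rightarrow> 'a. continuous_on UNIV g \<and> range g = X)"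

definition analytic_map :: "((nat \<Rightarrow> nat) \<Rightarrow> nat set) \<Rightarrow> bool" where
  "analytic_map C \<longleftrightarrow> analytic {(f, chi (C f)) | f. True}"

end

theory Submission
  imports Defs
begin

text \<open>Distinct E a and E b can agree only below the first point where a and b differ (there
  both read injective codes of initial segments), on C a \<inter> C b, and on S(C a, a, e b) or
  S(C b, b, e a) when a resp. b lies in T; all of these sets are in I. For maximality against h:
  if h \<in> T then E h agrees with h on the positive set C h; otherwise (1) yields g with
  S(C h, h, e g) positive, and E g agrees with h there except on C h \<inter> C g, which is small
  when g \<in> T because then g \<noteq> h.
  For definability, range E is the union of e[-T] and the image of the part of the graph of C
  above T under the continuous map (f, c) \<mapsto> (f on c, e f off c). Borel subsets of Baire space
  are analytic, since closed sets are retracts of Baire space and analytic sets are closed under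
  countable unions and intersections; continuous images of analytic sets are analytic.\<close>

section \<open>Baire space\<close>

lemma length_restr [simp]: "length (restr f n) = n"
  by (simp add: restr_def)

lemma nth_restr [simp]: "j < n \<Longrightarrow> restr f n ! j = f j"
  by (simp add: restr_def)

lemma restr_0 [simp]: "restr f 0 = []"
  by (simp add: restr_def)

lemma restr_Suc [simp]: "restr f (Suc n) = restr f n @ [f n]"
  by (simp add: restr_def)

lemma restr_eq_iff: "restr f n = restr g n \<longleftrightarrow> (\<forall>j<n. f j = g j)"
  by (auto simp: restr_def)

definition cylinder :: "nat list \<Rightarrow> (nat \<Rightarrow> nat) set" where
  "cylinder s = {y. restr y (length s) = s}"

lemma mem_cylinder: "y \<in> cylinder s \<longleftrightarrow> (\<forall>j<length s. y j = s ! j)"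
  by (auto simp: cylinder_def list_eq_iff_nth_eq)

lemma eventually_nhds_eq_discrete:
  fixes g :: "'a::topological_space \<Rightarrow> 'b::discrete_topology"
  assumes "continuous_on UNIV g"
  shows "eventually (\<lambda>y. g y = g x) (nhds x)"
proof -
  have "open (g -` {g x})"
    using open_discrete assms by (rule open_vimage)
  then show ?thesis
    unfolding eventually_nhds by blast
qed

lemma eventually_nhds_restr_eq:
  fixes g :: "'a::topological_space \<Rightarrow> nat \<Rightarrow> nat"
  assumes "continuous_on UNIV g"
  shows "eventually (\<lambda>y. restr (g y) n = restr (g x) n) (nhds x)"
proof -
  have "eventually (\<lambda>y. g y j = g x j) (nhds x)" for j
    using eventually_nhds_eq_discrete[OF continuous_on_product_then_coordinatewise[OF assms]] .
  then have "eventually (\<lambda>y. \<forall>j\<in>{..<n}. g y j = g x j) (nhds x)"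
    by (intro eventually_ball_finite) auto
  then show ?thesis
    by (rule eventually_mono) (simp add: restr_eq_iff)
qed

lemma continuous_on_locally_constant:
  fixes h :: "'a::topological_space \<Rightarrow> 'b::topological_space"
  assumes "\<And>x. eventually (\<lambda>y. h y = h x) (nhds x)"
  shows "continuous_on UNIV h"
  unfolding continuous_on_topological
proof (intro ballI allI impI)
  fix x B assume "open B" "h x \<in> B"
  obtain A where A: "open A" "x \<in> A" "\<forall>y\<in>A. h y = h x"
    using assms[of x] unfolding eventually_nhds by blast
  then have "\<forall>y\<in>UNIV. y \<in> A \<longrightarrow> h y \<in> B"
    using \<open>h x \<in> B\<close> by metis
  with A(1,2) show "\<exists>A. open A \<and> x \<in> A \<and> (\<forall>y\<in>UNIV. y \<in> A \<longrightarrow> h y \<in> B)"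
    by blast
qed

lemma continuous_on_finitely_determined:
  fixes h :: "(nat \<Rightarrow> nat) \<Rightarrow> nat \<Rightarrow> 'b::topological_space"
  assumes "\<And>i. \<exists>n. \<forall>x y. restr y n = restr x n \<longrightarrow> h y i = h x i"
  shows "continuous_on UNIV h"
proof (intro continuous_on_coordinatewise_then_product continuous_on_locally_constant)
  fix i x
  obtain n where n: "\<forall>x y. restr y n = restr x n \<longrightarrow> h y i = h x i"
    using assms by blast
  have "eventually (\<lambda>y. restr y n = restr x n) (nhds x)"
    using eventually_nhds_restr_eq[OF continuous_on_id] by simp
  then show "eventually (\<lambda>y. h y i = h x i) (nhds x)"
    by (rule eventually_mono) (use n in blast)
qed

lemma open_contains_cylinder:
  assumes "open U" "x \<in> U"
  shows "\<exists>n. cylinder (restr x n) \<subseteq> U"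
proof -
  from product_topology_open_contains_basis[of "\<lambda>i. euclidean" UNIV U x] assms
  obtain X where X: "x \<in> (\<Pi>\<^sub>E i\<in>UNIV. X i)" "finite {i. X i \<noteq> topspace euclidean}"
      "(\<Pi>\<^sub>E i\<in>UNIV. X i) \<subseteq> U"
    unfolding open_fun_def by blast
  then obtain n where n: "\<And>i. X i \<noteq> UNIV \<Longrightarrow> i < n"
    using finite_nat_set_iff_bounded by auto
  have "cylinder (restr x n) \<subseteq> (\<Pi>\<^sub>E i\<in>UNIV. X i)"
  proof
    fix y assume "y \<in> cylinder (restr x n)"
    then have "\<forall>j<n. y j = x j"
      by (simp add: cylinder_def restr_eq_iff)
    with X(1) n show "y \<in> (\<Pi>\<^sub>E i\<in>UNIV. X i)"
      by (auto simp: PiE_iff) (metis UNIV_I not_less)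
  qed
  with X(3) show ?thesis
    by blast
qed

lemma closed_cylinder: "closed (cylinder s)"
proof -
  have "cylinder s = (\<Inter>j<length s. {y. y j = s ! j})"
    by (auto simp: mem_cylinder)
  moreover have "closed {y::nat \<Rightarrow> nat. y j = s ! j}" for j
    by (intro closed_Collect_eq continuous_on_product_coordinates continuous_on_const)
  ultimately show ?thesis
    by auto
qed

section \<open>Analytic sets\<close>

lemma analytic_continuous_image:
  fixes h :: "'a::topological_space \<Rightarrow> 'b::topological_space"
  assumes "analytic A" "continuous_on UNIV h"
  shows "analytic (h ` A)"
proof (cases "A = {}")
  case False
  then obtain g :: "(nat \<Rightarrow> nat) \<Rightarrow> 'a" where g: "continuous_on UNIV g" "range g = A"
    using assms(1) unfolding analytic_def by blast
  have "continuous_on UNIV (h \<circ> g)"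
    using g(1) assms(2) by (rule continuous_on_compose[OF _ continuous_on_subset]) simp
  moreover have "range (h \<circ> g) = h ` A"
    by (simp flip: g(2) add: image_image)
  ultimately show ?thesis
    unfolding analytic_def by blast
qed (simp add: analytic_def)

lemma continuous_on_indexed_by_head:
  fixes G :: "nat \<Rightarrow> (nat \<Rightarrow> nat) \<Rightarrow> 'a::topological_space"
  assumes "\<And>n. continuous_on UNIV (G n)"
  shows "continuous_on UNIV (\<lambda>y. G (y 0) (\<lambda>m. y (Suc m)))"
  unfolding continuous_on_topological
proof (intro ballI allI impI)
  fix x B assume "open B" "G (x 0) (\<lambda>m. x (Suc m)) \<in> B"
  let ?U = "(\<lambda>y. G (x 0) (\<lambda>m. y (Suc m))) -` B \<inter> (\<lambda>y. y 0) -` {x 0}"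
  have "continuous_on UNIV (\<lambda>y::nat \<Rightarrow> nat. \<lambda>m. y (Suc m))"
    by (intro continuous_on_coordinatewise_then_product continuous_on_product_coordinates)
  then have "continuous_on UNIV (\<lambda>y::nat \<Rightarrow> nat. G (x 0) (\<lambda>m. y (Suc m)))"
    by (rule continuous_on_compose2[OF assms]) simp
  then have "open ?U"
    using \<open>open B\<close> by (intro open_Int open_vimage open_discrete continuous_on_product_coordinates)
  moreover have "x \<in> ?U" "\<forall>y\<in>UNIV. y \<in> ?U \<longrightarrow> G (y 0) (\<lambda>m. y (Suc m)) \<in> B"
    using \<open>G (x 0) (\<lambda>m. x (Suc m)) \<in> B\<close> by auto
  ultimately show "\<exists>A. open A \<and> x \<in> A \<and> (\<forall>y\<in>UNIV. y \<in> A \<longrightarrow> G (y 0) (\<lambda>m. y (Suc m)) \<in> B)"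
    by blast
qed

lemma analytic_UN:
  fixes A :: "nat \<Rightarrow> 'a::topological_space set"
  assumes "\<And>n. analytic (A n)"
  shows "analytic (\<Union>n. A n)"
proof (cases "\<forall>n. A n = {}")
  case False
  then obtain n0 where n0: "A n0 \<noteq> {}"
    by blast
  define A' where "A' n = (if A n = {} then A n0 else A n)" for n
  have "\<exists>g :: (nat \<Rightarrow> nat) \<Rightarrow> 'a. continuous_on UNIV g \<and> range g = A' n" for n
    using assms[of n] assms[of n0] n0 unfolding analytic_def A'_def by auto
  then obtain G :: "nat \<Rightarrow> (nat \<Rightarrow> nat) \<Rightarrow> 'a"
    where G: "\<And>n. continuous_on UNIV (G n)" "\<And>n. range (G n) = A' n"
    by metis
  define h where "h y = G (y 0) (\<lambda>m. y (Suc m))" for y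
  have "range h = (\<Union>n. A n)"
  proof
    show "range h \<subseteq> (\<Union>n. A n)"
      using G(2) unfolding h_def A'_def by (force split: if_splits)
    show "(\<Union>n. A n) \<subseteq> range h"
    proof
      fix z assume "z \<in> (\<Union>n. A n)"
      then obtain n w where "z = G n w"
        using G(2) unfolding A'_def by (metis UN_E equals0D rangeE)
      then have "z = h (case_nat n w)"
        by (simp add: h_def)
      then show "z \<in> range h"
        by blast
    qed
  qed
  moreover have "continuous_on UNIV h"
    unfolding h_def using G(1) by (rule continuous_on_indexed_by_head)
  ultimately show ?thesis
    unfolding analytic_def by blast
qed (simp add: analytic_def)

lemma analytic_Union_countable:
  fixes \<A> :: "'a::topological_space set set"
  assumes "countable \<A>" "\<And>A. A \<in> \<A> \<Longrightarrow> analytic A"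
  shows "analytic (\<Union>\<A>)"
proof (cases "\<A> = {}")
  case False
  then have "\<Union>\<A> = (\<Union>n. from_nat_into \<A> n)"
    using assms(1) by (metis range_from_nat_into)
  moreover have "analytic (\<Union>n. from_nat_into \<A> n)"
    using False assms(2) by (intro analytic_UN) (simp add: from_nat_into)
  ultimately show ?thesis
    by simp
qed (simp add: analytic_def)

lemma analytic_Un:
  fixes A B :: "'a::topological_space set"
  assumes "analytic A" "analytic B"
  shows "analytic (A \<union> B)"
  using analytic_Union_countable[of "{A, B}"] assms by auto

definition prefixes :: "(nat \<Rightarrow> nat) set \<Rightarrow> nat list set" where
  "prefixes F = {s. \<exists>y\<in>F. restr y (length s) = s}"

text \<open>Follow x as long as it stays within the tree of prefixes of F, and leave along the
  least admissible branch otherwise.\<close>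

fun retract_prefix :: "(nat \<Rightarrow> nat) set \<Rightarrow> (nat \<Rightarrow> nat) \<Rightarrow> nat \<Rightarrow> nat list" where
  "retract_prefix F x 0 = []"
| "retract_prefix F x (Suc n) =
    (let s = retract_prefix F x n
     in if s @ [x n] \<in> prefixes F then s @ [x n] else s @ [LEAST k. s @ [k] \<in> prefixes F])"

definition retract :: "(nat \<Rightarrow> nat) set \<Rightarrow> (nat \<Rightarrow> nat) \<Rightarrow> nat \<Rightarrow> nat" where
  "retract F x n = retract_prefix F x (Suc n) ! n"

lemma length_retract_prefix [simp]: "length (retract_prefix F x n) = n"
  by (induction n) (simp_all add: Let_def)

lemma restr_retract: "restr (retract F x) n = retract_prefix F x n"
  by (induction n) (simp_all add: retract_def Let_def nth_append)

lemma retract_prefix_in_prefixes: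
  assumes "F \<noteq> {}"
  shows "retract_prefix F x n \<in> prefixes F"
proof (induction n)
  case 0
  then show ?case
    using assms by (auto simp: prefixes_def restr_def)
next
  case (Suc n)
  let ?s = "retract_prefix F x n"
  obtain y where y: "y \<in> F" "restr y n = ?s"
    using Suc.IH by (auto simp: prefixes_def)
  have "?s @ [y n] \<in> prefixes F"
    unfolding prefixes_def using y by (intro CollectI bexI[of _ y]) (simp_all flip: y(2))
  then have "?s @ [LEAST k. ?s @ [k] \<in> prefixes F] \<in> prefixes F"
    by (rule LeastI)
  then show ?case
    by (simp add: Let_def)
qed

lemma retract_prefix_cong: "restr y n = restr x n \<Longrightarrow> retract_prefix F y n = retract_prefix F x n"
  by (induction n) (simp_all add: Let_def)

lemma retract_fixes: "x \<in> F \<Longrightarrow> retract F x = x"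
proof -
  assume "x \<in> F"
  then have "retract_prefix F x n = restr x n" for n
    by (induction n) (auto simp: prefixes_def Let_def)
  then have "restr (retract F x) n = restr x n" for n
    by (simp add: restr_retract)
  then show "retract F x = x"
    by (metis lessI nth_restr ext)
qed

lemma retract_in:
  assumes "closed F" "F \<noteq> {}"
  shows "retract F x \<in> F"
proof (rule ccontr)
  assume "retract F x \<notin> F"
  then obtain n where n: "cylinder (restr (retract F x) n) \<subseteq> - F"
    using open_contains_cylinder assms(1) by (metis ComplI open_Compl closed_def)
  obtain y where "y \<in> F" "restr y n = restr (retract F x) n"
    using retract_prefix_in_prefixes[OF assms(2)] by (fastforce simp: prefixes_def restr_retract)
  with n show False
    by (auto simp: cylinder_def)
qed

lemma continuous_on_retract: "continuous_on UNIV (retract F)"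
  by (rule continuous_on_finitely_determined)
    (metis retract_def retract_prefix_cong)

lemma closed_analytic:
  assumes "closed (F :: (nat \<Rightarrow> nat) set)"
  shows "analytic F"
proof (cases "F = {}")
  case False
  then have "range (retract F) = F"
    using retract_in[OF assms] retract_fixes by (metis image_subsetI rangeI subsetI subset_antisym)
  then show ?thesis
    unfolding analytic_def using continuous_on_retract by blast
qed (simp add: analytic_def)

definition seq_column :: "(nat \<Rightarrow> nat) \<Rightarrow> nat \<Rightarrow> nat \<Rightarrow> nat" where
  "seq_column x n = (\<lambda>m. x (prod_encode (n, m)))"

definition interleave :: "(nat \<Rightarrow> nat \<Rightarrow> nat) \<Rightarrow> nat \<Rightarrow> nat" where
  "interleave w = (\<lambda>k. w (fst (prod_decode k)) (snd (prod_decode k)))"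

lemma seq_column_interleave [simp]: "seq_column (interleave w) n = w n"
  by (simp add: seq_column_def interleave_def)

lemma continuous_on_seq_column: "continuous_on UNIV (\<lambda>x. seq_column x n)"
  unfolding seq_column_def
  by (intro continuous_on_coordinatewise_then_product continuous_on_product_coordinates)

lemma closed_Collect_fun_eq:
  fixes f g :: "'a::topological_space \<Rightarrow> 'i \<Rightarrow> 'b::t2_space"
  assumes "continuous_on UNIV f" "continuous_on UNIV g"
  shows "closed {x. f x = g x}"
proof -
  have "closed {x. f x i = g x i}" for i
    using assms[THEN continuous_on_product_then_coordinatewise] by (rule closed_Collect_eq)
  then show ?thesis
    unfolding fun_eq_iff by (rule closed_Collect_all)
qed

text \<open>Parametrize every A n along its own column of a single point; the points whose columns
  are all mapped to the same value form a closed set.\<close>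

lemma analytic_INT:
  fixes A :: "nat \<Rightarrow> (nat \<Rightarrow> nat) set"
  assumes "\<And>n. analytic (A n)"
  shows "analytic (\<Inter>n. A n)"
proof (cases "\<exists>n. A n = {}")
  case False
  then have "\<exists>g :: (nat \<Rightarrow> nat) \<Rightarrow> nat \<Rightarrow> nat. continuous_on UNIV g \<and> range g = A n" for n
    using assms[of n] unfolding analytic_def by simp
  then obtain G :: "nat \<Rightarrow> (nat \<Rightarrow> nat) \<Rightarrow> nat \<Rightarrow> nat"
    where G: "\<And>n. continuous_on UNIV (G n)" "\<And>n. range (G n) = A n"
    by metis
  have cont: "continuous_on UNIV (\<lambda>x. G n (seq_column x n))" for n
    by (rule continuous_on_compose2[OF G(1) continuous_on_seq_column]) simp
  define K where "K = {x. \<forall>n. G n (seq_column x n) = G 0 (seq_column x 0)}"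
  have "closed K"
    unfolding K_def using cont by (intro closed_Collect_all closed_Collect_fun_eq)
  then have "analytic ((\<lambda>x. G 0 (seq_column x 0)) ` K)"
    using cont by (intro analytic_continuous_image closed_analytic)
  moreover have "(\<lambda>x. G 0 (seq_column x 0)) ` K = (\<Inter>n. A n)"
  proof
    show "(\<lambda>x. G 0 (seq_column x 0)) ` K \<subseteq> (\<Inter>n. A n)"
    proof (rule image_subsetI)
      fix x assume "x \<in> K"
      then have "G 0 (seq_column x 0) \<in> range (G n)" for n
        unfolding K_def by (metis (mono_tags) mem_Collect_eq rangeI)
      then show "G 0 (seq_column x 0) \<in> (\<Inter>n. A n)"
        using G(2) by simp
    qed
    show "(\<Inter>n. A n) \<subseteq> (\<lambda>x. G 0 (seq_column x 0)) ` K"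
    proof
      fix z assume "z \<in> (\<Inter>n. A n)"
      then have "\<forall>n. \<exists>w. G n w = z"
        using G(2) by (metis INT_E UNIV_I rangeE)
      then obtain w where "\<And>n. G n (w n) = z"
        by metis
      then show "z \<in> (\<lambda>x. G 0 (seq_column x 0)) ` K"
        unfolding K_def by (intro image_eqI[of _ _ "interleave w"]) simp_all
    qed
  qed
  ultimately show ?thesis
    by simp
next
  case True
  then have "(\<Inter>n. A n) = {}"
    by blast
  then show ?thesis
    by (simp add: analytic_def)
qed

lemma open_analytic:
  assumes "open (U :: (nat \<Rightarrow> nat) set)"
  shows "analytic U"
proof -
  have cover: "\<Union>{cylinder s | s. cylinder s \<subseteq> U} = U"
  proof
    show "\<Union>{cylinder s | s. cylinder s \<subseteq> U} \<subseteq> U"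
      by blast
    show "U \<subseteq> \<Union>{cylinder s | s. cylinder s \<subseteq> U}"
    proof
      fix x assume "x \<in> U"
      then obtain n where "cylinder (restr x n) \<subseteq> U"
        using open_contains_cylinder assms by blast
      moreover have "x \<in> cylinder (restr x n)"
        by (simp add: cylinder_def)
      ultimately show "x \<in> \<Union>{cylinder s | s. cylinder s \<subseteq> U}"
        by blast
    qed
  qed
  have "countable {cylinder s | s. cylinder s \<subseteq> U}"
    by (rule countable_subset[of _ "range cylinder"]) auto
  then have "analytic (\<Union>{cylinder s | s. cylinder s \<subseteq> U})"
    using closed_analytic closed_cylinder by (intro analytic_Union_countable) blast+
  then show ?thesis
    by (simp only: cover)
qed

lemma borel_analytic:
  assumes "A \<in> sets (borel :: (nat \<Rightarrow> nat) measure)"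
  shows "analytic A"
proof -
  have "A \<in> sigma_sets UNIV {S. open S}"
    using assms by (simp add: sets_borel)
  then have "analytic A \<and> analytic (- A)"
  proof (induction rule: sigma_sets.induct)
    case (Basic a)
    then show ?case
      by (simp add: open_analytic closed_analytic closed_Compl)
  next
    case Empty
    have "analytic (UNIV :: (nat \<Rightarrow> nat) set)"
      using closed_analytic by blast
    then show ?case
      by (simp add: analytic_def)
  next
    case (Compl a)
    then show ?case
      by (simp add: Compl_eq_Diff_UNIV[symmetric])
  next
    case (Union a)
    then show ?case
      by (simp add: analytic_UN analytic_INT)
  qed
  then show ?thesis
    by simp
qed

lemma analytic_Int_vimage_borel:
  fixes A :: "'a::topological_space set" and p :: "'a \<Rightarrow> nat \<Rightarrow> nat"
  assumes "analytic A" "continuous_on UNIV p" "B \<in> sets borel"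
  shows "analytic (A \<inter> p -` B)"
proof (cases "A = {}")
  case False
  then obtain g :: "(nat \<Rightarrow> nat) \<Rightarrow> 'a" where g: "continuous_on UNIV g" "range g = A"
    using assms(1) unfolding analytic_def by blast
  have "continuous_on UNIV (p \<circ> g)"
    using g(1) assms(2) by (rule continuous_on_compose[OF _ continuous_on_subset]) simp
  then have "(p \<circ> g) -` B \<in> sets borel"
    using measurable_sets[OF borel_measurable_continuous_onI assms(3)] by (simp add: comp_def)
  then have "analytic (g ` ((p \<circ> g) -` B))"
    by (intro analytic_continuous_image borel_analytic g(1))
  moreover have "g ` ((p \<circ> g) -` B) = A \<inter> p -` B"
    using g(2) by auto
  ultimately show ?thesis
    by simp
qed (simp add: analytic_def)

section \<open>The maximal eventually different family\<close>

lemma ideal_on_nat_subset: "ideal_on_nat I \<Longrightarrow> A \<in> I \<Longrightarrow> B \<subseteq> A \<Longrightarrow> B \<in> I"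
  unfolding ideal_on_nat_def by blast

lemma ideal_on_nat_Un: "ideal_on_nat I \<Longrightarrow> A \<in> I \<Longrightarrow> B \<in> I \<Longrightarrow> A \<union> B \<in> I"
  unfolding ideal_on_nat_def by blast

lemma ideal_on_nat_empty: "ideal_on_nat I \<Longrightarrow> {} \<in> I"
  unfolding ideal_on_nat_def by blast

lemma I_AD_positive: "I_AD I \<A> \<Longrightarrow> A \<in> \<A> \<Longrightarrow> A \<notin> I"
  unfolding I_AD_def positive_def by blast

lemma I_AD_Int: "I_AD I \<A> \<Longrightarrow> A \<in> \<A> \<Longrightarrow> A' \<in> \<A> \<Longrightarrow> A \<noteq> A' \<Longrightarrow> A \<inter> A' \<in> I"
  unfolding I_AD_def by blast

lemma enc_eq_imp_le:
  assumes "inj code" "enc code f n = enc code g n" "f k \<noteq> g k"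
  shows "n \<le> k"
proof -
  have "restr f n = restr g n"
    using assms(1,2) by (simp add: enc_def inj_eq)
  with assms(3) show ?thesis
    by (metis not_le restr_eq_iff)
qed

definition med_map :: "(nat list \<Rightarrow> nat) \<Rightarrow> (nat \<Rightarrow> nat) set \<Rightarrow> ((nat \<Rightarrow> nat) \<Rightarrow> nat set)
    \<Rightarrow> (nat \<Rightarrow> nat) \<Rightarrow> nat \<Rightarrow> nat" where
  "med_map code T C f n = (if f \<in> T \<and> n \<in> C f then f n else enc code f n)"

lemma I_ED_med_map:
  assumes ideal: "ideal_on_nat I" and "fin \<subseteq> I" "inj code" "inj C" "I_AD I (range C)"
    and small: "\<And>f g. f \<in> T \<Longrightarrow> S (C f) f (enc code g) \<in> I"
    and "a \<noteq> b"
  shows "I_ED I (med_map code T C a) (med_map code T C b)"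
proof -
  obtain k where k: "a k \<noteq> b k"
    using \<open>a \<noteq> b\<close> by blast
  define D where "D f g = (if f \<in> T then S (C f) f (enc code g) else {})" for f g
  have le: "n \<le> k" if "enc code a n = enc code b n" for n
    using \<open>inj code\<close> that k by (rule enc_eq_imp_le)
  have "{n. med_map code T C a n = med_map code T C b n} \<subseteq> {..k} \<union> D a b \<union> D b a \<union> (C a \<inter> C b)"
    using le by (auto simp: med_map_def D_def S_def)
  moreover have "{..k} \<in> I"
    using \<open>fin \<subseteq> I\<close> by (auto simp: fin_def)
  moreover have "D f g \<in> I" for f g
    using small ideal_on_nat_empty[OF ideal] by (simp add: D_def)
  moreover have "C a \<inter> C b \<in> I"
    using \<open>a \<noteq> b\<close> \<open>inj C\<close> \<open>I_AD I (range C)\<close> by (simp add: I_AD_Int inj_eq)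
  ultimately show ?thesis
    unfolding I_ED_def by (meson ideal ideal_on_nat_Un ideal_on_nat_subset)
qed

lemma not_I_ED_med_map:
  assumes ideal: "ideal_on_nat I" and "inj C" "I_AD I (range C)"
    and large: "\<And>f. f \<notin> T \<Longrightarrow> \<exists>g. S (C f) f (enc code g) \<notin> I"
  shows "\<exists>f. \<not> I_ED I (med_map code T C f) h"
proof (cases "h \<in> T")
  case True
  then have "C h \<subseteq> {n. med_map code T C h n = h n}"
    by (auto simp: med_map_def)
  with \<open>I_AD I (range C)\<close> show ?thesis
    unfolding I_ED_def by (meson I_AD_positive ideal ideal_on_nat_subset rangeI)
next
  case False
  then obtain g where g: "S (C h) h (enc code g) \<notin> I"
    using large by blast
  define D where "D = (if g \<in> T then C h \<inter> C g else {})"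
  have "D \<in> I"
    using False \<open>inj C\<close> \<open>I_AD I (range C)\<close> ideal_on_nat_empty[OF ideal]
    by (auto simp: D_def inj_eq intro!: I_AD_Int)
  have cover: "S (C h) h (enc code g) \<subseteq> {n. med_map code T C g n = h n} \<union> D"
    by (auto simp: med_map_def S_def D_def)
  have "{n. med_map code T C g n = h n} \<notin> I"
  proof
    assume "{n. med_map code T C g n = h n} \<in> I"
    then have "{n. med_map code T C g n = h n} \<union> D \<in> I"
      using \<open>D \<in> I\<close> by (rule ideal_on_nat_Un[OF ideal])
    with g cover show False
      using ideal_on_nat_subset[OF ideal] by blast
  qed
  then show ?thesis
    unfolding I_ED_def by blast
qed

lemma I_MED_family_range_med_map:
  assumes "ideal_on_nat I" "fin \<subseteq> I" "inj code" "inj C" "I_AD I (range C)"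
    and "\<And>f. f \<in> T \<longleftrightarrow> (\<forall>g. S (C f) f (enc code g) \<in> I)"
  shows "I_MED_family I (range (med_map code T C))"
proof -
  have small: "\<And>f g. f \<in> T \<Longrightarrow> S (C f) f (enc code g) \<in> I"
    and large: "\<And>f. f \<notin> T \<Longrightarrow> \<exists>g. S (C f) f (enc code g) \<notin> I"
    using assms(6) by blast+
  show ?thesis
    unfolding I_MED_family_def I_ED_family_def
  proof (intro conjI ballI allI impI)
    fix u v assume "u \<in> range (med_map code T C)" "v \<in> range (med_map code T C)" "u \<noteq> v"
    then obtain a b where "u = med_map code T C a" "v = med_map code T C b" "a \<noteq> b"
      by blast
    then show "I_ED I u v"
      using I_ED_med_map[OF assms(1-5) small] by simp
  next
    fix h
    obtain f where "\<not> I_ED I (med_map code T C f) h"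
      using not_I_ED_med_map[OF assms(1,4,5) large] by blast
    then show "\<exists>f\<in>range (med_map code T C). \<not> I_ED I f h"
      by blast
  qed
qed

text \<open>On T, the map E is f \<mapsto> enc_override code (f, chi (C f)); taking the pair as argument
  makes it continuous on the graph of C.\<close>

definition enc_override :: "(nat list \<Rightarrow> nat) \<Rightarrow> (nat \<Rightarrow> nat) \<times> (nat \<Rightarrow> bool) \<Rightarrow> nat \<Rightarrow> nat" where
  "enc_override code p n = (if snd p n then fst p n else enc code (fst p) n)"

lemma continuous_on_enc: "continuous_on UNIV (enc code)"
  by (rule continuous_on_finitely_determined) (metis enc_def)

lemma continuous_on_enc_override: "continuous_on UNIV (enc_override code)"
proof (intro continuous_on_coordinatewise_then_product continuous_on_locally_constant)
  fix i and p :: "(nat \<Rightarrow> nat) \<times> (nat \<Rightarrow> bool)"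
  have "eventually (\<lambda>q. snd q i = snd p i) (nhds p)"
    using continuous_on_product_then_coordinatewise[OF continuous_on_snd[OF continuous_on_id]]
    by (rule eventually_nhds_eq_discrete)
  moreover have "eventually (\<lambda>q. restr (fst q) (Suc i) = restr (fst p) (Suc i)) (nhds p)"
    using continuous_on_fst[OF continuous_on_id] by (rule eventually_nhds_restr_eq)
  ultimately show "eventually (\<lambda>q. enc_override code q i = enc_override code p i) (nhds p)"
    by eventually_elim (simp add: enc_override_def enc_def)
qed

lemma analytic_range_med_map:
  assumes "T \<in> sets borel" "analytic_map C"
  shows "analytic (range (med_map code T C))"
proof -
  define graph where "graph = {(f, chi (C f)) | f. True}"
  have "range (med_map code T C) = med_map code T C ` (- T) \<union> med_map code T C ` T"
    by blast
  also have "med_map code T C ` (- T) = enc code ` (- T)"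
    by (intro image_cong) (auto simp: med_map_def)
  also have "med_map code T C ` T = enc_override code ` (graph \<inter> fst -` T)"
  proof -
    have "graph \<inter> fst -` T = (\<lambda>f. (f, chi (C f))) ` T"
      by (auto simp: graph_def)
    moreover have "med_map code T C ` T = (\<lambda>f. enc_override code (f, chi (C f))) ` T"
      by (intro image_cong) (auto simp: med_map_def enc_override_def chi_def)
    ultimately show ?thesis
      by (simp add: image_image)
  qed
  finally have "range (med_map code T C) = enc code ` (- T) \<union> enc_override code ` (graph \<inter> fst -` T)" .
  moreover have "analytic (enc code ` (- T))"
    using sets.compl_sets[OF assms(1)]
    by (intro analytic_continuous_image borel_analytic continuous_on_enc) (simp add: Compl_eq_Diff_UNIV)
  moreover have "analytic (enc_override code ` (graph \<inter> fst -` T))"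
    using assms unfolding analytic_map_def graph_def
    by (intro analytic_continuous_image analytic_Int_vimage_borel continuous_on_enc_override
        continuous_on_fst continuous_on_id)
  ultimately show ?thesis
    by (simp add: analytic_Un)
qed

theorem lemma3p1:
  fixes I :: "nat set set"
    and code :: "nat list \<Rightarrow> nat"
    and T :: "(nat \<Rightarrow> nat) set"
    and C :: "(nat \<Rightarrow> nat) \<Rightarrow> nat set"
    and E :: "(nat \<Rightarrow> nat) \<Rightarrow> nat \<Rightarrow> nat"
  assumes ideal: "ideal_on_nat I"
    and fin_sub: "fin \<subseteq> I"
    and code_inj: "inj code"
    and C_inf: "\<And>f. infinite (C f)"
    and T_char: "\<And>f. f \<in> T \<longleftrightarrow> (\<forall>g. S (C f) f (enc code g) \<in> I)"
    and C_inj: "inj C"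
    and C_AD: "I_AD I (range C)"
    and E_def: "\<And>f n. E f n = (if f \<in> T \<and> n \<in> C f then f n else enc code f n)"
  shows "I_MED_family I (range E) \<and>
         (borel_family I \<and> T \<in> sets (borel :: (nat \<Rightarrow> nat) measure) \<and> analytic_map C
            \<longrightarrow> analytic (range E))"
proof -
  have "E = med_map code T C"
    using E_def by (simp add: med_map_def fun_eq_iff)
  then show ?thesis
    using I_MED_family_range_med_map[OF ideal fin_sub code_inj C_inj C_AD T_char]
      analytic_range_med_map by auto
qed

end
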